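(* Let $\mathcal{D}$ denote either the unit circle $S^1$ or the unit interval $[0,1]$, and let $c:\mathcal{D}\to\mathbb{R}^2$ be a smooth immersed plane curve with speed $\omega=|\dot c|>0$ and signed curvature $\kappa$. Let $\tilde c:=q(c)=\dot c/\sqrt{|\dot c|}$ be its square root velocity transform, and denote the speed of $\tilde c$ by $\tilde\omega=|\dot{\tilde c}|$. Then \[ \tilde{\omega}=\sqrt{\frac{\dot{\omega}^2}{4\omega}+\omega^3\kappa^2}. \] Moreover, $\tilde c$ is an immersion if and only if $\kappa$ and $\dot\omega$ have no common zeros. In this case, \[ \tilde{\kappa}\,\tilde{\omega}=\kappa\,\omega+\dot{\varphi}, \] where $\tilde\kappa$ denotes the signed curvature of $\tilde c$ and \[ \varphi:=\arctan\!\left(\frac{2\omega^2\kappa}{\dot{\omega}}\right). \]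
   Context: Dots denote derivatives with respect to the curve parameter $t\in\mathcal{D}$. For the plane curve $c$, $T=\dot c/\omega$ is the unit tangent, $N$ is the unit normal (obtained by rotating $T$ by $+\pi/2$), and the signed curvature $\kappa$ is defined by the Frenet equations $\dot T=\omega\kappa N$, $\dot N=-\omega\kappa T$; the signed curvature of $\tilde c$ is defined analogously. The square root velocity transform $\tilde c=\dot c/\sqrt{|\dot c|}$ is again a smooth curve in $\mathbb{R}^2$, but need not be an immersion. *)

theory Defs
  imports "HOL-Analysis.Analysis"
begin

text \<open>Plane curves are modelled as maps into the complex plane (identified with R^2).
  Rotation by +pi/2 is multiplication by the imaginary unit.\<close>

definition dot :: "(real \<Rightarrow> complex) \<Rightarrow> real \<Rightarrow> complex" where
  "dot f t = vector_derivative f (at t)"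

definition smooth_on :: "real set \<Rightarrow> (real \<Rightarrow> complex) \<Rightarrow> bool" where
  "smooth_on U f \<longleftrightarrow> (\<forall>n. \<forall>t\<in>U. ((dot ^^ n) f) differentiable (at t))"

definition speed :: "(real \<Rightarrow> complex) \<Rightarrow> real \<Rightarrow> real" where
  "speed f t = norm (dot f t)"

definition unit_tangent :: "(real \<Rightarrow> complex) \<Rightarrow> real \<Rightarrow> complex" where
  "unit_tangent f t = dot f t / complex_of_real (speed f t)"

definition unit_normal :: "(real \<Rightarrow> complex) \<Rightarrow> real \<Rightarrow> complex" where
  "unit_normal f t = \<i> * unit_tangent f t"

definition signed_curvature :: "(real \<Rightarrow> complex) \<Rightarrow> real \<Rightarrow> real" where
  "signed_curvature f t =
     (THE k::real. dot (unit_tangent f) t = complex_of_real (speed f t * k) * unit_normal f t)"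

definition srv :: "(real \<Rightarrow> complex) \<Rightarrow> real \<Rightarrow> complex" where
  "srv f t = dot f t / complex_of_real (sqrt (speed f t))"

definition immersion_on :: "real set \<Rightarrow> (real \<Rightarrow> complex) \<Rightarrow> bool" where
  "immersion_on D f \<longleftrightarrow> (\<forall>t\<in>D. dot f t \<noteq> 0)"

end

(* Let p = c' be the velocity and z = p'/p = w'/w + i w k its logarithmic derivative, where w is
   the speed and k the signed curvature.  The square root velocity transform q = p / sqrt |p|
   satisfies q' = q h with h = z - Re z / 2 = w'/(2 w) + i w k.  Hence |q'| = sqrt w |h|, which is
   the speed formula, and q is an immersion exactly where h does not vanish.  For any curve with
   velocity q h, curvature times speed is Im (q''/q') = Im h + Im (h'/h), and Im (h'/h) is the
   derivative of the argument of h, which is locally arctan (Im h / Re h) = arctan (2 w^2 k / w'),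
   or, near a zero of w', a constant minus arctan (Re h / Im h). *)

theory Submission
  imports Defs
begin

lemma dot_eqI: "(f has_vector_derivative a) (at t) \<Longrightarrow> dot f t = a"
  by (simp add: dot_def vector_derivative_at)

lemma has_vector_derivative_dot:
  "f differentiable at t \<Longrightarrow> (f has_vector_derivative dot f t) (at t)"
  by (simp add: dot_def vector_derivative_works[symmetric])

lemma has_real_derivative_cmod:
  fixes f :: "real \<Rightarrow> complex"
  assumes f: "(f has_vector_derivative a) (at t)" and nz: "f t \<noteq> 0"
  shows "((\<lambda>s. cmod (f s)) has_real_derivative cmod (f t) * Re (a / f t)) (at t)"
proof -
  have "((\<lambda>s. sqrt ((Re (f s))\<^sup>2 + (Im (f s))\<^sup>2)) has_real_derivative
          (Re (f t) * Re a + Im (f t) * Im a) / cmod (f t)) (at t)"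
    using f nz
    by (auto intro!: derivative_eq_intros simp: has_vector_derivative_complex_iff cmod_def
        complex_eq_iff field_simps sum_power2_gt_zero_iff not_sum_power2_lt_zero)
  moreover have "(Re (f t) * Re a + Im (f t) * Im a) / cmod (f t) = cmod (f t) * Re (a / f t)"
    using nz unfolding Re_divide cmod_power2[symmetric] by (simp add: power2_eq_square field_simps)
  ultimately show ?thesis
    by (simp add: cmod_def)
qed

lemma has_real_derivative_arctan_Im_div_Re:
  assumes h: "(h has_vector_derivative h') (at t)" and nz: "Re (h t) \<noteq> 0"
  shows "((\<lambda>s. arctan (Im (h s) / Re (h s))) has_real_derivative Im (h' / h t)) (at t)"
proof -
  have "cmod (h t) \<noteq> 0"
    using nz by auto
  have "((\<lambda>s. Im (h s) / Re (h s)) has_real_derivative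
          (Im h' * Re (h t) - Im (h t) * Re h') / (Re (h t) * Re (h t))) (at t)"
    using h nz by (intro DERIV_divide) (auto simp: has_vector_derivative_complex_iff)
  from DERIV_chain2[OF DERIV_arctan this]
  show ?thesis
  proof (rule DERIV_cong)
    have "1 + (Im (h t) / Re (h t))\<^sup>2 = (cmod (h t) / Re (h t))\<^sup>2"
      using nz by (simp add: cmod_power2 field_simps)
    then show "inverse (1 + (Im (h t) / Re (h t))\<^sup>2) *
        ((Im h' * Re (h t) - Im (h t) * Re h') / (Re (h t) * Re (h t))) = Im (h' / h t)"
      using nz \<open>cmod (h t) \<noteq> 0\<close> by (simp add: Im_divide cmod_power2 power2_eq_square field_simps)
  qed
qed

lemma has_real_derivative_arctan_Re_div_Im:
  assumes h: "(h has_vector_derivative h') (at t)" and nz: "Im (h t) \<noteq> 0"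
  shows "((\<lambda>s. arctan (Re (h s) / Im (h s))) has_real_derivative - Im (h' / h t)) (at t)"
proof -
  \<comment> \<open>\<open>\<i> * cnj h\<close> swaps the real and imaginary parts of \<open>h\<close>.\<close>
  have "((\<lambda>s. \<i> * cnj (h s)) has_vector_derivative \<i> * cnj h') (at t)"
    using h by (intro derivative_intros)
  from has_real_derivative_arctan_Im_div_Re[OF this] show ?thesis
    using nz by (simp flip: complex_cnj_divide)
qed

definition velocity_log_deriv :: "(real \<Rightarrow> complex) \<Rightarrow> real \<Rightarrow> complex" where
  "velocity_log_deriv f t = dot (dot f) t / dot f t"

definition srv_log_deriv :: "(real \<Rightarrow> complex) \<Rightarrow> real \<Rightarrow> complex" where
  "srv_log_deriv f t = velocity_log_deriv f t - of_real (Re (velocity_log_deriv f t)) / 2"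

lemma has_real_derivative_speed:
  assumes "dot f differentiable at t" and "dot f t \<noteq> 0"
  shows "(speed f has_real_derivative speed f t * Re (velocity_log_deriv f t)) (at t)"
  unfolding speed_def[abs_def] velocity_log_deriv_def
  by (rule has_real_derivative_cmod[OF has_vector_derivative_dot]) fact+

lemma signed_curvature_mult_speed:
  assumes diff: "dot f differentiable at t" and nz: "dot f t \<noteq> 0"
  shows "signed_curvature f t * speed f t = Im (velocity_log_deriv f t)"
proof -
  let ?z = "velocity_log_deriv f t"
  have w: "speed f t > 0"
    using nz by (simp add: speed_def)
  have p': "dot (dot f) t = dot f t * ?z"
    using nz by (simp add: velocity_log_deriv_def)
  have "unit_tangent f = (\<lambda>s. dot f s * of_real (inverse (speed f s)))"
    by (simp add: fun_eq_iff unit_tangent_def divide_inverse)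
  then have "(unit_tangent f has_vector_derivative
               dot f t * (?z - of_real (Re ?z)) / of_real (speed f t)) (at t)"
    using has_vector_derivative_mult[OF has_vector_derivative_dot[OF diff]
        has_vector_derivative_of_real[OF DERIV_inverse_fun[OF has_real_derivative_speed[OF diff nz]]]]
    using w by (simp add: p' field_simps power2_eq_square)
  moreover have "?z - of_real (Re ?z) = \<i> * of_real (Im ?z)"
    by (simp add: complex_eq_iff)
  ultimately have tangent': "dot (unit_tangent f) t = of_real (Im ?z) * unit_normal f t"
    by (auto dest!: dot_eqI simp: unit_normal_def unit_tangent_def)
  have normal_nz: "unit_normal f t \<noteq> 0"
    using w nz by (simp add: unit_normal_def unit_tangent_def)
  have "signed_curvature f t = Im ?z / speed f t"
    unfolding signed_curvature_def tangent'
  proof (rule the_equality)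
    fix k
    assume "of_real (Im ?z) * unit_normal f t = of_real (speed f t * k) * unit_normal f t"
    then show "k = Im ?z / speed f t"
      using normal_nz w by (simp add: field_simps del: of_real_mult)
  qed (use w in simp)
  then show ?thesis
    using w by simp
qed

lemma has_vector_derivative_srv:
  assumes diff: "dot f differentiable at t" and nz: "dot f t \<noteq> 0"
  shows "(srv f has_vector_derivative srv f t * srv_log_deriv f t) (at t)"
proof -
  let ?z = "velocity_log_deriv f t"
  have w: "speed f t > 0"
    using nz by (simp add: speed_def)
  have p': "dot (dot f) t = dot f t * ?z"
    using nz by (simp add: velocity_log_deriv_def)
  have r: "((\<lambda>s. inverse (sqrt (speed f s))) has_real_derivative
             - Re ?z / (2 * sqrt (speed f t))) (at t)"
    using w by (auto intro!: derivative_eq_intros has_real_derivative_speed[OF diff nz]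
        simp: field_simps power2_eq_square)
  have "srv f = (\<lambda>s. dot f s * of_real (inverse (sqrt (speed f s))))"
    by (simp add: fun_eq_iff srv_def divide_inverse)
  then show ?thesis
    using has_vector_derivative_mult[OF has_vector_derivative_dot[OF diff]
        has_vector_derivative_of_real[OF r]] w
    by (simp add: srv_def srv_log_deriv_def p' field_simps)
qed

lemma dot_srv:
  "dot f differentiable at t \<Longrightarrow> dot f t \<noteq> 0 \<Longrightarrow>
    dot (srv f) t = srv f t * srv_log_deriv f t"
  by (rule dot_eqI[OF has_vector_derivative_srv])

lemma signed_curvature_mult_speed_of_log_deriv:
  assumes V: "open V" "t \<in> V"
    and f: "\<And>s. s \<in> V \<Longrightarrow> (f has_vector_derivative f s * h s) (at s)"
    and h: "(h has_vector_derivative h') (at t)"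
    and nz: "f t \<noteq> 0" "h t \<noteq> 0"
  shows "signed_curvature f t * speed f t = Im (h t) + Im (h' / h t)"
proof -
  have dot_f: "dot f s = f s * h s" if "s \<in> V" for s
    using f[OF that] by (rule dot_eqI)
  have "((\<lambda>s. f s * h s) has_vector_derivative f t * h' + f t * h t * h t) (at t)"
    using has_vector_derivative_mult[OF f[OF V(2)] h] .
  then have "(dot f has_vector_derivative f t * h' + f t * h t * h t) (at t)"
    by (rule has_vector_derivative_transform_within_open[OF _ V]) (simp add: dot_f)
  moreover have "velocity_log_deriv f t = h t + h' / h t"
    using calculation nz by (auto dest!: dot_eqI simp: velocity_log_deriv_def dot_f[OF V(2)] field_simps)
  ultimately show ?thesis
    using nz by (simp add: signed_curvature_mult_speed differentiableI_vector dot_f[OF V(2)])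
qed

lemma deriv_speed:
  "dot f differentiable at t \<Longrightarrow> dot f t \<noteq> 0 \<Longrightarrow>
    deriv (speed f) t = speed f t * Re (velocity_log_deriv f t)"
  by (rule DERIV_imp_deriv[OF has_real_derivative_speed])

lemma signed_curvature_eq:
  assumes "dot f differentiable at t" and "dot f t \<noteq> 0"
  shows "signed_curvature f t = Im (velocity_log_deriv f t) / speed f t"
  using signed_curvature_mult_speed[OF assms] assms(2)
  by (simp add: speed_def eq_divide_eq)

lemma speed_srv:
  assumes diff: "dot f differentiable at t" and nz: "dot f t \<noteq> 0"
  shows "speed (srv f) t =
    sqrt ((deriv (speed f) t)\<^sup>2 / (4 * speed f t) + (speed f t)^3 * (signed_curvature f t)\<^sup>2)"
proof -
  let ?z = "velocity_log_deriv f t"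
  have w: "speed f t > 0"
    using nz by (simp add: speed_def)
  have "cmod (srv f t) = sqrt (speed f t)"
    using w by (simp add: srv_def norm_divide speed_def real_div_sqrt)
  then have "speed (srv f) t = sqrt (speed f t) * cmod (srv_log_deriv f t)"
    by (simp add: speed_def[of "srv f"] dot_srv[OF diff nz] norm_mult)
  also have "\<dots> = sqrt (speed f t * ((Re ?z / 2)\<^sup>2 + (Im ?z)\<^sup>2))"
    by (simp add: srv_log_deriv_def cmod_def real_sqrt_mult)
  also have "speed f t * ((Re ?z / 2)\<^sup>2 + (Im ?z)\<^sup>2) =
      (deriv (speed f) t)\<^sup>2 / (4 * speed f t) + (speed f t)^3 * (signed_curvature f t)\<^sup>2"
    using w by (simp add: deriv_speed[OF diff nz] signed_curvature_eq[OF diff nz]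
        field_simps power2_eq_square power3_eq_cube)
  finally show ?thesis .
qed

lemma dot_srv_eq_0_iff:
  assumes diff: "dot f differentiable at t" and nz: "dot f t \<noteq> 0"
  shows "dot (srv f) t = 0 \<longleftrightarrow> signed_curvature f t = 0 \<and> deriv (speed f) t = 0"
proof -
  have "srv f t \<noteq> 0"
    using nz by (simp add: srv_def speed_def)
  moreover have "srv_log_deriv f t = 0 \<longleftrightarrow>
      Re (velocity_log_deriv f t) = 0 \<and> Im (velocity_log_deriv f t) = 0"
    by (simp add: srv_log_deriv_def complex_eq_iff)
  ultimately show ?thesis
    using nz by (auto simp: dot_srv[OF diff nz] signed_curvature_eq[OF diff nz] deriv_speed[OF diff nz]
        speed_def)
qed

lemma srv_log_deriv_Im_div_Re:
  assumes "dot f differentiable at t" and "dot f t \<noteq> 0"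
  shows "Im (srv_log_deriv f t) / Re (srv_log_deriv f t) =
           2 * (speed f t)\<^sup>2 * signed_curvature f t / deriv (speed f) t"
  using assms(2)
  by (simp add: srv_log_deriv_def signed_curvature_eq[OF assms] deriv_speed[OF assms] speed_def
      power2_eq_square)

lemma srv_log_deriv_Re_div_Im:
  assumes "dot f differentiable at t" and "dot f t \<noteq> 0"
  shows "Re (srv_log_deriv f t) / Im (srv_log_deriv f t) =
           deriv (speed f) t / (2 * (speed f t)\<^sup>2 * signed_curvature f t)"
  using assms(2)
  by (simp add: srv_log_deriv_def signed_curvature_eq[OF assms] deriv_speed[OF assms] speed_def
      power2_eq_square)

lemma differentiable_srv_log_deriv:
  assumes "dot f differentiable at t" and "dot (dot f) differentiable at t" and "dot f t \<noteq> 0"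
  shows "srv_log_deriv f differentiable at t"
proof -
  have "velocity_log_deriv f differentiable at t"
    unfolding velocity_log_deriv_def[abs_def] using assms by (intro differentiable_divide)
  then have "(velocity_log_deriv f has_vector_derivative dot (velocity_log_deriv f) t) (at t)"
    by (rule has_vector_derivative_dot)
  then have "(srv_log_deriv f has_vector_derivative
      dot (velocity_log_deriv f) t - of_real (Re (dot (velocity_log_deriv f) t)) / 2) (at t)"
    unfolding srv_log_deriv_def[abs_def]
    by (intro derivative_intros has_vector_derivative_of_real has_field_derivative_Re)
  then show ?thesis
    by (rule differentiableI_vector)
qed

lemma deriv_arctan_eq_Im_log_deriv_srv_log_deriv:
  assumes V: "open V" "t \<in> V"
    and diff: "\<And>s. s \<in> V \<Longrightarrow> dot f differentiable at s"
    and nz: "\<And>s. s \<in> V \<Longrightarrow> dot f s \<noteq> 0"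
    and h: "(srv_log_deriv f has_vector_derivative h') (at t)"
    and h_nz: "srv_log_deriv f t \<noteq> 0"
  shows "(if deriv (speed f) t \<noteq> 0
          then deriv (\<lambda>s. arctan (2 * (speed f s)\<^sup>2 * signed_curvature f s / deriv (speed f) s)) t
          else - deriv (\<lambda>s. arctan (deriv (speed f) s / (2 * (speed f s)\<^sup>2 * signed_curvature f s))) t)
         = Im (h' / srv_log_deriv f t)"
proof (cases "deriv (speed f) t = 0")
  case False
  then have "Re (srv_log_deriv f t) \<noteq> 0"
    using nz[OF V(2)] by (simp add: deriv_speed[OF diff nz, OF V(2) V(2)] srv_log_deriv_def)
  from has_real_derivative_arctan_Im_div_Re[OF h this]
  have "((\<lambda>s. arctan (2 * (speed f s)\<^sup>2 * signed_curvature f s / deriv (speed f) s))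
          has_real_derivative Im (h' / srv_log_deriv f t)) (at t)"
    by (rule has_field_derivative_transform_within_open[OF _ V])
      (simp add: srv_log_deriv_Im_div_Re[OF diff nz])
  then show ?thesis
    using False by (simp add: DERIV_imp_deriv)
next
  case True
  then have "Im (srv_log_deriv f t) \<noteq> 0"
    using h_nz nz[OF V(2)]
    by (auto simp: deriv_speed[OF diff nz, OF V(2) V(2)] srv_log_deriv_def complex_eq_iff speed_def)
  from has_real_derivative_arctan_Re_div_Im[OF h this]
  have "((\<lambda>s. arctan (deriv (speed f) s / (2 * (speed f s)\<^sup>2 * signed_curvature f s)))
          has_real_derivative - Im (h' / srv_log_deriv f t)) (at t)"
    by (rule has_field_derivative_transform_within_open[OF _ V])
      (simp add: srv_log_deriv_Re_div_Im[OF diff nz])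
  then show ?thesis
    using True by (simp add: DERIV_imp_deriv)
qed

lemma signed_curvature_srv_mult_speed:
  assumes V: "open V" "t \<in> V"
    and diff: "\<And>s. s \<in> V \<Longrightarrow> dot f differentiable at s"
    and nz: "\<And>s. s \<in> V \<Longrightarrow> dot f s \<noteq> 0"
    and diff2: "dot (dot f) differentiable at t"
    and imm: "dot (srv f) t \<noteq> 0"
  shows "signed_curvature (srv f) t * speed (srv f) t = signed_curvature f t * speed f t +
           (if deriv (speed f) t \<noteq> 0
            then deriv (\<lambda>s. arctan (2 * (speed f s)\<^sup>2 * signed_curvature f s / deriv (speed f) s)) t
            else - deriv (\<lambda>s. arctan (deriv (speed f) s / (2 * (speed f s)\<^sup>2 * signed_curvature f s))) t)"
proof -
  let ?h = "srv_log_deriv f"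
  have h': "(?h has_vector_derivative dot ?h t) (at t)"
    using differentiable_srv_log_deriv[OF diff[OF V(2)] diff2 nz[OF V(2)]]
    by (rule has_vector_derivative_dot)
  have "srv f t \<noteq> 0" and h_nz: "?h t \<noteq> 0"
    using imm by (simp_all add: dot_srv[OF diff nz, OF V(2) V(2)])
  then have "signed_curvature (srv f) t * speed (srv f) t = Im (?h t) + Im (dot ?h t / ?h t)"
    using has_vector_derivative_srv[OF diff nz]
    by (intro signed_curvature_mult_speed_of_log_deriv[OF V _ h'])
  moreover have "Im (?h t) = signed_curvature f t * speed f t"
    using signed_curvature_mult_speed[OF diff nz, OF V(2) V(2)] by (simp add: srv_log_deriv_def)
  ultimately show ?thesis
    by (simp add: deriv_arctan_eq_Im_log_deriv_srv_log_deriv[OF V diff nz h' h_nz])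
qed

theorem proposition1:
  fixes c :: "real \<Rightarrow> complex" and D U :: "real set"
  assumes dom: "D = {0..1} \<or> (D = UNIV \<and> (\<forall>t. c (t + 1) = c t))"
    and "open U" and "D \<subseteq> U" and "smooth_on U c"
    and "\<forall>t\<in>D. speed c t > 0"
  defines "w \<equiv> speed c" and "k \<equiv> signed_curvature c"
    and "ct \<equiv> srv c" and "wt \<equiv> speed (srv c)" and "kt \<equiv> signed_curvature (srv c)"
  shows "(\<forall>t\<in>D. wt t = sqrt ((deriv w t)\<^sup>2 / (4 * w t) + (w t)^3 * (k t)\<^sup>2))
       \<and> (immersion_on D ct \<longleftrightarrow> (\<forall>t\<in>D. \<not> (k t = 0 \<and> deriv w t = 0)))
       \<and> (immersion_on D ct \<longrightarrow>
           (\<forall>t\<in>D. kt t * wt t = k t * w t +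
              (if deriv w t \<noteq> 0
               then deriv (\<lambda>s. arctan (2 * (w s)\<^sup>2 * k s / deriv w s)) t
               else - deriv (\<lambda>s. arctan (deriv w s / (2 * (w s)\<^sup>2 * k s))) t)))"
proof -
  \<comment> \<open>All claims are pointwise.\<close>
  have smooth: "(dot ^^ n) c differentiable at t" if "t \<in> U" for n t
    using \<open>smooth_on U c\<close> that by (simp add: smooth_on_def)
  have diff: "dot c differentiable at t" and diff2: "dot (dot c) differentiable at t"
    if "t \<in> U" for t
    using smooth[OF that, of 1] smooth[OF that, of 2] by (simp_all add: numeral_2_eq_2)
  have regular: "dot c differentiable at t" "dot c t \<noteq> 0" if "t \<in> D" for t
    using that diff \<open>D \<subseteq> U\<close> \<open>\<forall>t\<in>D. speed c t > 0\<close> by (auto simp: speed_def)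
  define V where "V = U \<inter> dot c -` (- {0})"
  have "continuous_on U (dot c)"
    using diff by (intro continuous_at_imp_continuous_on ballI differentiable_imp_continuous_within)
  then have "open V"
    unfolding V_def using \<open>open U\<close> by (intro continuous_open_preimage) auto
  have curvature: "signed_curvature (srv c) t * speed (srv c) t = k t * w t +
           (if deriv w t \<noteq> 0 then deriv (\<lambda>s. arctan (2 * (w s)\<^sup>2 * k s / deriv w s)) t
            else - deriv (\<lambda>s. arctan (deriv w s / (2 * (w s)\<^sup>2 * k s))) t)"
    if "t \<in> D" and "dot (srv c) t \<noteq> 0" for t
    unfolding w_def k_def
    using that \<open>D \<subseteq> U\<close> regular diff diff2
    by (intro signed_curvature_srv_mult_speed[OF \<open>open V\<close>]) (auto simp: V_def)
  show ?thesis
    unfolding ct_def wt_def kt_def immersion_on_def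
    using regular curvature by (simp add: w_def k_def speed_srv dot_srv_eq_0_iff)
qed

end
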